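(* Consider the single-element, single-slab periodic space-time SBP scheme: unknowns $\boldsymbol\rho,\boldsymbol g_1,\dots,\boldsymbol g_{n_v}\in\mathbb R^{(n_t+1)(n_x+1)}$ satisfying $$\mathsf D_t\boldsymbol\rho+\tilde{\mathsf D}_x\langle v\boldsymbol g\rangle=-\sigma_a\boldsymbol\rho-\mathsf H_t^{-1}\mathsf t_B\mathsf t_B^\top(\boldsymbol\rho-\boldsymbol\rho(0)),$$ $$\mathsf D_t\boldsymbol g_k+\tfrac{v_k}{\varepsilon}\tilde{\mathsf D}_x\boldsymbol g_k-\tfrac1\varepsilon\langle v\tilde{\mathsf D}_x\boldsymbol g\rangle+\tfrac{v_k}{\varepsilon^2}\tilde{\mathsf D}_x\boldsymbol\rho=-\Big(\tfrac{\sigma_s}{\varepsilon^2}+\sigma_a\Big)\boldsymbol g_k-\mathsf H_t^{-1}\mathsf t_B\mathsf t_B^\top(\boldsymbol g_k-\boldsymbol g_k(0)),\quad k=1,\dots,n_v,$$ with initial data satisfying $\langle\boldsymbol g(0)\rangle=0$. Then the scheme is stable: every solution satisfies $$\tfrac12\boldsymbol\rho^\top(\bar{\boldsymbol t}_T\bar{\boldsymbol t}_T^\top\otimes\bar{\mathsf H}_x)\boldsymbol\rho+\tfrac{\varepsilon^2}2\langle\boldsymbol g^\top(\bar{\boldsymbol t}_T\bar{\boldsymbol t}_T^\top\otimes\bar{\mathsf H}_x)\boldsymbol g\rangle\le\tfrac12\boldsymbol\rho(0)^\top(\bar{\boldsymbol t}_B\bar{\boldsymbol t}_B^\top\otimes\bar{\mathsf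 H}_x)\boldsymbol\rho(0)+\tfrac{\varepsilon^2}2\langle\boldsymbol g(0)^\top(\bar{\boldsymbol t}_B\bar{\boldsymbol t}_B^\top\otimes\bar{\mathsf H}_x)\boldsymbol g(0)\rangle,$$ i.e. the discrete energy at the final time is bounded by the discrete energy of the initial data.
   Context: SBP operators: on nodes $x_0<\dots<x_n$, a matrix $\bar{\mathsf D}$ is a degree-$p$ SBP approximation of $d/dx$ if $\bar{\mathsf D}\boldsymbol x^k=k\boldsymbol x^{k-1}$ for $0\le k\le p$, $\bar{\mathsf D}=\bar{\mathsf H}^{-1}\bar{\mathsf Q}$ with $\bar{\mathsf H}$ diagonal symmetric positive definite, and $\bar{\mathsf Q}+\bar{\mathsf Q}^\top=\bar{\boldsymbol t}_R\bar{\boldsymbol t}_R^\top-\bar{\boldsymbol t}_L\bar{\boldsymbol t}_L^\top=\mathrm{diag}(-1,0,\dots,0,1)$, $\bar{\boldsymbol t}_L=(1,0,\dots,0)^\top$, $\bar{\boldsymbol t}_R=(0,\dots,0,1)^\top$. Let $\bar{\mathsf D}_x=\bar{\mathsf H}_x^{-1}\bar{\mathsf Q}_x$ be such an operator on $n_x+1$ spatial nodes and $\bar{\mathsf D}_t=\bar{\mathsf H}_t^{-1}\bar{\mathsf Q}_t$ one on $n_t+1$ temporal nodes with $\bar{\boldsymbol t}_B=(1,0,\dots,0)^\top$, $\bar{\boldsymbol t}_T=(0,\dots,0,1)^\top$. With identities $\mathsf I_{n_x},\mathsf I_{n_t}$ of sizes $n_x+1,n_t+1$: $\mathsf D_t=\bar{\mathsf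 D}_t\otimes\mathsf I_{n_x}$, $\mathsf D_x=\mathsf I_{n_t}\otimes\bar{\mathsf D}_x$, $\mathsf H_t=\bar{\mathsf H}_t\otimes\mathsf I_{n_x}$, $\mathsf H_x=\mathsf I_{n_t}\otimes\bar{\mathsf H}_x$, $\mathsf t_R=\mathsf I_{n_t}\otimes\bar{\boldsymbol t}_R$, $\mathsf t_L=\mathsf I_{n_t}\otimes\bar{\boldsymbol t}_L$, $\mathsf t_B=\bar{\boldsymbol t}_B\otimes\mathsf I_{n_x}$. Periodic operator: $\tilde{\mathsf D}_x=\mathsf D_x-\frac12\mathsf H_x^{-1}\big(\mathsf t_R(\mathsf t_R^\top-\mathsf t_L^\top)-\mathsf t_L(\mathsf t_L^\top-\mathsf t_R^\top)\big)$. Velocity nodes $v_k$ and weights $\omega_k$, $k=1,\dots,n_v$, with $\sum_k\omega_k=1$, $\sum_k\omega_kv_k=0$; $\langle\boldsymbol a\rangle=\sum_k\omega_k\boldsymbol a_k$ for $k$-indexed vectors or scalars (e.g. $\langle\boldsymbol g^\top M\boldsymbol g\rangle=\sum_k\omega_k\boldsymbol g_k^\top M\boldsymbol g_k$). Parameters $\varepsilon>0$, $\sigma_s>0$, $\sigma_a\ge0$. $\boldsymbol\rho(0),\boldsymbol g_k(0)$ are given initial-data vectors. *)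

theory Defs
  imports Complex_Main
begin

text \<open>Matrices are represented as functions nat => nat => real; dimensions are
carried explicitly (entries outside the index range are irrelevant).  Column vectors are (n x 1) matrices.\<close>

type_synonym rmat = "nat \<Rightarrow> nat \<Rightarrow> real"
type_synonym rvec = "nat \<Rightarrow> real"

definition idm :: "nat \<Rightarrow> rmat" where
  "idm n = (\<lambda>i j. if i = j then 1 else 0)"

definition mmul :: "nat \<Rightarrow> rmat \<Rightarrow> rmat \<Rightarrow> rmat" where
  "mmul m A B = (\<lambda>i j. \<Sum>l<m. A i l * B l j)"

definition mtr :: "rmat \<Rightarrow> rmat" where
  "mtr A = (\<lambda>i j. A j i)"

definition madd :: "rmat \<Rightarrow> rmat \<Rightarrow> rmat" where
  "madd A B = (\<lambda>i j. A i j + B i j)"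

definition msub :: "rmat \<Rightarrow> rmat \<Rightarrow> rmat" where
  "msub A B = (\<lambda>i j. A i j - B i j)"

definition msc :: "real \<Rightarrow> rmat \<Rightarrow> rmat" where
  "msc c A = (\<lambda>i j. c * A i j)"

definition mv :: "nat \<Rightarrow> rmat \<Rightarrow> rvec \<Rightarrow> rvec" where
  "mv m A x = (\<lambda>i. \<Sum>j<m. A i j * x j)"

definition kron :: "nat \<Rightarrow> nat \<Rightarrow> rmat \<Rightarrow> rmat \<Rightarrow> rmat" where
  "kron rB cB A B = (\<lambda>i j. A (i div rB) (j div cB) * B (i mod rB) (j mod cB))"

text \<open>Inverse of a diagonal matrix (only applied to diagonal matrices with
nonzero diagonal, where it is the matrix inverse).\<close>
definition dinv :: "rmat \<Rightarrow> rmat" where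
  "dinv H = (\<lambda>i j. if i = j then 1 / H i i else 0)"

definition qf :: "nat \<Rightarrow> rmat \<Rightarrow> rvec \<Rightarrow> real" where
  "qf N M x = (\<Sum>i<N. \<Sum>j<N. x i * M i j * x j)"

definition e_first :: "nat \<Rightarrow> rmat" where
  "e_first n = (\<lambda>i j. if i = 0 then 1 else 0)"

definition e_last :: "nat \<Rightarrow> rmat" where
  "e_last n = (\<lambda>i j. if i = n then 1 else 0)"

definition sbp :: "nat \<Rightarrow> nat \<Rightarrow> rvec \<Rightarrow> rmat \<Rightarrow> rmat \<Rightarrow> rmat \<Rightarrow> bool" where
  "sbp n p x D H Q \<longleftrightarrow>
     1 \<le> n \<and>
     (\<forall>i<n. x i < x (Suc i)) \<and>
     (\<forall>i\<le>n. \<forall>j\<le>n. i \<noteq> j \<longrightarrow> H i j = 0) \<and>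
     (\<forall>i\<le>n. 0 < H i i) \<and>
     (\<forall>i\<le>n. \<forall>j\<le>n. D i j = Q i j / H i i) \<and>
     (\<forall>i\<le>n. \<forall>j\<le>n. Q i j + Q j i =
        mmul 1 (e_last n) (mtr (e_last n)) i j - mmul 1 (e_first n) (mtr (e_first n)) i j) \<and>
     (\<forall>k\<le>p. \<forall>i\<le>n. (\<Sum>j\<le>n. D i j * x j ^ k) =
        (if k = 0 then 0 else real k * x i ^ (k - 1)))"

definition vavg :: "nat \<Rightarrow> (nat \<Rightarrow> real) \<Rightarrow> (nat \<Rightarrow> real) \<Rightarrow> real" where
  "vavg nv \<omega> a = (\<Sum>k=1..nv. \<omega> k * a k)"


text \<open>Space-time vectors have length (nt+1)(nx+1), time index outer:
entry number i*(nx+1)+j corresponds to time node i and space node j.\<close>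

definition Dt_st :: "nat \<Rightarrow> nat \<Rightarrow> rmat \<Rightarrow> rmat" where
  "Dt_st nt nx Dtb = kron (Suc nx) (Suc nx) Dtb (idm (Suc nx))"

definition Dx_st :: "nat \<Rightarrow> nat \<Rightarrow> rmat \<Rightarrow> rmat" where
  "Dx_st nt nx Dxb = kron (Suc nx) (Suc nx) (idm (Suc nt)) Dxb"

definition Ht_st :: "nat \<Rightarrow> nat \<Rightarrow> rmat \<Rightarrow> rmat" where
  "Ht_st nt nx Htb = kron (Suc nx) (Suc nx) Htb (idm (Suc nx))"

definition Hx_st :: "nat \<Rightarrow> nat \<Rightarrow> rmat \<Rightarrow> rmat" where
  "Hx_st nt nx Hxb = kron (Suc nx) (Suc nx) (idm (Suc nt)) Hxb"

definition tR_st :: "nat \<Rightarrow> nat \<Rightarrow> rmat" where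
  "tR_st nt nx = kron (Suc nx) 1 (idm (Suc nt)) (e_last nx)"

definition tL_st :: "nat \<Rightarrow> nat \<Rightarrow> rmat" where
  "tL_st nt nx = kron (Suc nx) 1 (idm (Suc nt)) (e_first nx)"

definition tB_st :: "nat \<Rightarrow> nat \<Rightarrow> rmat" where
  "tB_st nt nx = kron (Suc nx) (Suc nx) (e_first nt) (idm (Suc nx))"

definition Dxper_st :: "nat \<Rightarrow> nat \<Rightarrow> rmat \<Rightarrow> rmat \<Rightarrow> rmat" where
  "Dxper_st nt nx Dxb Hxb =
     msub (Dx_st nt nx Dxb)
       (msc (1/2) (mmul (Suc nt * Suc nx) (dinv (Hx_st nt nx Hxb))
          (msub (mmul (Suc nt) (tR_st nt nx) (msub (mtr (tR_st nt nx)) (mtr (tL_st nt nx))))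
                (mmul (Suc nt) (tL_st nt nx) (msub (mtr (tL_st nt nx)) (mtr (tR_st nt nx)))))))"

definition SAT_st :: "nat \<Rightarrow> nat \<Rightarrow> rmat \<Rightarrow> rmat" where
  "SAT_st nt nx Htb =
     mmul (Suc nt * Suc nx) (dinv (Ht_st nt nx Htb)) (mmul (Suc nx) (tB_st nt nx) (mtr (tB_st nt nx)))"

end

theory Submission
  imports Defs
begin

text \<open>The energy method. Let W = H_t \<otimes> H_x. The SBP property of D_t gives
  2 x^T W D_t x = x^T (t_T t_T^T \<otimes> H_x) x - x^T (t_B t_B^T \<otimes> H_x) x, the periodic space
  operator is W-skew, and W times the penalty matrix is t_B t_B^T \<otimes> H_x. Testing the \<rho>-equation
  with W \<rho> and the g_k-equation with \<epsilon>^2 \<omega>_k W g_k, the penalty terms are bounded by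
  2ab \<le> a^2 + b^2. Averaging the g-equations shows that \<langle>g\<rangle> solves a damped homogeneous
  problem, so \<langle>g\<rangle> = 0, which removes the term \<langle>v D_x g\<rangle>; the remaining coupling terms
  \<rho>^T W D_x \<langle>v g\<rangle> and \<langle>v g\<rangle>^T W D_x \<rho> cancel by skewness.\<close>

section \<open>Weighted inner products\<close>

definition wdot :: "nat \<Rightarrow> (nat \<Rightarrow> real) \<Rightarrow> rvec \<Rightarrow> rvec \<Rightarrow> real" where
  "wdot N w x y = (\<Sum>i<N. w i * x i * y i)"

lemma wdot_cong:
  "(\<And>i. i < N \<Longrightarrow> x i = x' i) \<Longrightarrow> (\<And>i. i < N \<Longrightarrow> y i = y' i) \<Longrightarrow> wdot N w x y = wdot N w x' y'"
  unfolding wdot_def by simp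

lemma wdot_add_right: "wdot N w x (\<lambda>i. y i + z i) = wdot N w x y + wdot N w x z"
  unfolding wdot_def by (simp add: distrib_left sum.distrib)

lemma wdot_diff_right: "wdot N w x (\<lambda>i. y i - z i) = wdot N w x y - wdot N w x z"
  unfolding wdot_def by (simp add: right_diff_distrib sum_subtractf)

lemma wdot_scale_right: "wdot N w x (\<lambda>i. c * y i) = c * wdot N w x y"
  unfolding wdot_def by (simp add: sum_distrib_left mult_ac)

lemma wdot_minus_right: "wdot N w x (\<lambda>i. - y i) = - wdot N w x y"
  unfolding wdot_def by (simp add: sum_negf)

lemmas wdot_linear_right = wdot_add_right wdot_diff_right wdot_minus_right wdot_scale_right

lemma wdot_zero_left [simp]: "wdot N w (\<lambda>i. 0) y = 0"
  unfolding wdot_def by simp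

lemma wdot_zero_right [simp]: "wdot N w x (\<lambda>i. 0) = 0"
  unfolding wdot_def by simp

lemma wdot_diff_weight: "wdot N (\<lambda>i. a i - b i) x y = wdot N a x y - wdot N b x y"
  unfolding wdot_def by (simp add: left_diff_distrib sum_subtractf)

lemma wdot_sum_left: "(\<Sum>k\<in>K. c k * wdot N w (f k) y) = wdot N w (\<lambda>i. \<Sum>k\<in>K. c k * f k i) y"
  unfolding wdot_def by (simp add: sum_distrib_left sum_distrib_right mult_ac sum.swap[of _ K])

lemma wdot_self_nonneg: "(\<And>i. i < N \<Longrightarrow> 0 \<le> w i) \<Longrightarrow> 0 \<le> wdot N w x x"
  unfolding wdot_def by (intro sum_nonneg) (simp add: mult.assoc)

lemma wdot_self_eq_0D:
  assumes "\<And>i. i < N \<Longrightarrow> 0 < w i" and "wdot N w x x = 0" and "i < N"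
  shows "x i = 0"
proof -
  have "\<forall>i\<in>{..<N}. w i * x i * x i = 0"
    using assms(2) unfolding wdot_def
    by (subst sum_nonneg_eq_0_iff[symmetric]) (auto simp: assms(1) less_imp_le mult.assoc)
  then show ?thesis using assms(1,3) by force
qed

lemma two_wdot_le_self_add:
  assumes "\<And>i. i < N \<Longrightarrow> 0 \<le> w i"
  shows "2 * wdot N w x y \<le> wdot N w x x + wdot N w y y"
proof -
  have "2 * (w i * x i * y i) \<le> w i * x i * x i + w i * y i * y i" if "i < N" for i
  proof -
    have "0 \<le> w i * (x i - y i)\<^sup>2" using assms that by simp
    then show ?thesis by (simp add: power2_eq_square algebra_simps)
  qed
  then have "(\<Sum>i<N. 2 * (w i * x i * y i)) \<le> (\<Sum>i<N. w i * x i * x i + w i * y i * y i)"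
    by (intro sum_mono) simp
  then show ?thesis unfolding wdot_def by (simp add: sum.distrib sum_distrib_left)
qed

lemma mv_cong: "(\<And>j. j < N \<Longrightarrow> x j = y j) \<Longrightarrow> mv N A x i = mv N A y i"
  unfolding mv_def by simp

lemma mv_diff: "mv N A (\<lambda>j. x j - y j) i = mv N A x i - mv N A y i"
  unfolding mv_def by (simp add: right_diff_distrib sum_subtractf)

lemma mv_zero [simp]: "mv N A (\<lambda>j. 0) i = 0"
  unfolding mv_def by simp

lemma mv_sum: "mv N A (\<lambda>j. \<Sum>k\<in>K. c k * f k j) i = (\<Sum>k\<in>K. c k * mv N A (f k) i)"
  unfolding mv_def by (simp add: sum_distrib_left mult_ac sum.swap[of _ K])

lemma wdot_mv: "wdot N w x (mv N A y) = (\<Sum>i<N. \<Sum>j<N. x i * (w i * A i j) * y j)"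
  unfolding wdot_def mv_def by (simp add: sum_distrib_left mult_ac)

lemma wdot_mv_symmetric_part:
  "wdot N w x (mv N A y) + wdot N w y (mv N A x)
   = (\<Sum>i<N. \<Sum>j<N. x i * (w i * A i j + w j * A j i) * y j)"
proof -
  have "wdot N w y (mv N A x) = (\<Sum>j<N. \<Sum>i<N. y j * (w j * A j i) * x i)"
    by (rule wdot_mv)
  also have "\<dots> = (\<Sum>i<N. \<Sum>j<N. x i * (w j * A j i) * y j)"
    by (subst sum.swap) (simp add: mult_ac)
  finally show ?thesis
    by (simp add: wdot_mv sum.distrib[symmetric] distrib_left distrib_right)
qed

lemma double_sum_diag:
  assumes "\<And>i j. i < N \<Longrightarrow> j < N \<Longrightarrow> M i j = (if i = j then d i else 0)"
  shows "(\<Sum>i<N. \<Sum>j<N. x i * M i j * y j) = wdot N d x y"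
proof -
  have "(\<Sum>i<N. \<Sum>j<N. x i * M i j * y j) = (\<Sum>i<N. \<Sum>j<N. if i = j then x i * d i * y j else 0)"
    using assms by (intro sum.cong refl) auto
  then show ?thesis unfolding wdot_def by (simp add: mult_ac)
qed

lemma qf_diag:
  "(\<And>i j. i < N \<Longrightarrow> j < N \<Longrightarrow> A i j = (if i = j then d i else 0)) \<Longrightarrow> qf N A x = wdot N d x x"
  unfolding qf_def by (rule double_sum_diag)

lemma wdot_mv_diag:
  "(\<And>i j. i < N \<Longrightarrow> j < N \<Longrightarrow> w i * A i j = (if i = j then d i else 0))
   \<Longrightarrow> wdot N w x (mv N A y) = wdot N d x y"
  unfolding wdot_mv by (rule double_sum_diag)

lemma wdot_mv_energy:
  "(\<And>i j. i < N \<Longrightarrow> j < N \<Longrightarrow> w i * A i j + w j * A j i = (if i = j then d i else 0))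
   \<Longrightarrow> 2 * wdot N w x (mv N A x) = wdot N d x x"
  using wdot_mv_symmetric_part[of N w x A x] double_sum_diag[of N _ d x x] by simp

lemma wdot_mv_skew:
  "(\<And>i j. i < N \<Longrightarrow> j < N \<Longrightarrow> w i * A i j + w j * A j i = 0)
   \<Longrightarrow> wdot N w x (mv N A y) + wdot N w y (mv N A x) = 0"
  by (simp add: wdot_mv_symmetric_part)

section \<open>Energy estimates for SBP-SAT discretisations\<close>

locale sbp_sat_energy =
  fixes N :: nat and W dT dB :: "nat \<Rightarrow> real" and Dt Dx S :: rmat
  assumes weight_pos: "\<And>i. i < N \<Longrightarrow> 0 < W i"
    and final_weight_nonneg: "\<And>i. i < N \<Longrightarrow> 0 \<le> dT i"
    and initial_weight_nonneg: "\<And>i. i < N \<Longrightarrow> 0 \<le> dB i"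
    and time_energy: "\<And>x. 2 * wdot N W x (mv N Dt x) = wdot N dT x x - wdot N dB x x"
    and space_skew: "\<And>x y. wdot N W x (mv N Dx y) + wdot N W y (mv N Dx x) = 0"
    and penalty: "\<And>x y. wdot N W x (mv N S y) = wdot N dB x y"
begin

lemma weighted_norm_nonneg: "0 \<le> wdot N W x x"
  using weight_pos by (intro wdot_self_nonneg less_imp_le)

lemma final_norm_nonneg: "0 \<le> wdot N dT x x"
  using final_weight_nonneg by (rule wdot_self_nonneg)

lemma penalized_energy:
  assumes "\<And>i. i < N \<Longrightarrow> mv N Dt u i = - c * u i - mv N S (\<lambda>j. u j - u0 j) i + r i"
  shows "wdot N dT u u + 2 * c * wdot N W u u \<le> wdot N dB u0 u0 + 2 * wdot N W u r"
proof -
  have "wdot N W u (mv N Dt u) = wdot N W u (\<lambda>i. - c * u i - mv N S (\<lambda>j. u j - u0 j) i + r i)"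
    by (rule wdot_cong) (simp_all add: assms)
  also have "\<dots> = - c * wdot N W u u - wdot N dB u u + wdot N dB u u0 + wdot N W u r"
    by (simp add: wdot_linear_right mv_diff penalty)
  finally have "wdot N dT u u = wdot N dB u u - 2 * c * wdot N W u u - 2 * wdot N dB u u
      + 2 * wdot N dB u u0 + 2 * wdot N W u r"
    using time_energy[of u] by simp
  moreover have "2 * wdot N dB u u0 \<le> wdot N dB u u + wdot N dB u0 u0"
    by (rule two_wdot_le_self_add) (rule initial_weight_nonneg)
  ultimately show ?thesis by linarith
qed

end

locale kinetic_scheme = sbp_sat_energy +
  fixes nv :: nat and \<omega> v :: "nat \<Rightarrow> real" and \<epsilon> \<sigma>s \<sigma>a :: real
    and \<rho> \<rho>0 :: rvec and g g0 :: "nat \<Rightarrow> rvec"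
  assumes weights_nonneg: "\<And>k. k \<in> {1..nv} \<Longrightarrow> 0 \<le> \<omega> k"
    and weights_sum: "(\<Sum>k=1..nv. \<omega> k) = 1"
    and weights_mean: "(\<Sum>k=1..nv. \<omega> k * v k) = 0"
    and eps_pos: "0 < \<epsilon>" and \<sigma>s_pos: "0 < \<sigma>s" and \<sigma>a_nonneg: "0 \<le> \<sigma>a"
    and initial_average: "\<And>i. i < N \<Longrightarrow> vavg nv \<omega> (\<lambda>k. g0 k i) = 0"
    and macro_eq: "\<And>i. i < N \<Longrightarrow>
      mv N Dt \<rho> i + mv N Dx (\<lambda>j. vavg nv \<omega> (\<lambda>k. v k * g k j)) i
      = - \<sigma>a * \<rho> i - mv N S (\<lambda>j. \<rho> j - \<rho>0 j) i"
    and micro_eq: "\<And>k i. k \<in> {1..nv} \<Longrightarrow> i < N \<Longrightarrow>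
      mv N Dt (g k) i + v k / \<epsilon> * mv N Dx (g k) i
      - 1 / \<epsilon> * vavg nv \<omega> (\<lambda>k'. v k' * mv N Dx (g k') i)
      + v k / \<epsilon>\<^sup>2 * mv N Dx \<rho> i
      = - (\<sigma>s / \<epsilon>\<^sup>2 + \<sigma>a) * g k i - mv N S (\<lambda>j. g k j - g0 k j) i"
begin

lemma micro_eq_residual:
  assumes "k \<in> {1..nv}" "i < N"
  shows "mv N Dt (g k) i = - (\<sigma>s / \<epsilon>\<^sup>2 + \<sigma>a) * g k i - mv N S (\<lambda>j. g k j - g0 k j) i
    + (1 / \<epsilon> * vavg nv \<omega> (\<lambda>k'. v k' * mv N Dx (g k') i)
       - v k / \<epsilon> * mv N Dx (g k) i - v k / \<epsilon>\<^sup>2 * mv N Dx \<rho> i)"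
  using micro_eq[OF assms] by linarith

text \<open>Averaging the g-equations, \<langle>1\<rangle> = 1, \<langle>v\<rangle> = 0 and \<langle>g(0)\<rangle> = 0 leave
  D_t \<langle>g\<rangle> = -(\<sigma>_s/\<epsilon>^2 + \<sigma>_a) \<langle>g\<rangle> - H_t^-1 t_B t_B^T \<langle>g\<rangle>, whose energy estimate forces \<langle>g\<rangle> = 0.\<close>

lemma micro_average_vanishes:
  assumes "i < N"
  shows "vavg nv \<omega> (\<lambda>k. g k i) = 0"
proof -
  define c where "c = \<sigma>s / \<epsilon>\<^sup>2 + \<sigma>a"
  define G where "G j = vavg nv \<omega> (\<lambda>k. g k j)" for j
  have "mv N Dt G i = - c * G i - mv N S (\<lambda>j. G j - 0) i + 0" if "i < N" for i
  proof -
    define X where "X = vavg nv \<omega> (\<lambda>k'. v k' * mv N Dx (g k') i)"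
    have "mv N Dt G i = (\<Sum>k=1..nv. \<omega> k * mv N Dt (g k) i)"
      unfolding G_def vavg_def by (rule mv_sum)
    also have "\<dots> = (\<Sum>k=1..nv. \<omega> k * (- c * g k i - mv N S (g k) i + mv N S (g0 k) i
        + (1 / \<epsilon> * X - v k / \<epsilon> * mv N Dx (g k) i - v k / \<epsilon>\<^sup>2 * mv N Dx \<rho> i)))"
      using micro_eq_residual[OF _ that] by (intro sum.cong refl) (simp add: c_def X_def mv_diff)
    also have "\<dots> = - c * G i - mv N S G i + mv N S (\<lambda>j. vavg nv \<omega> (\<lambda>k. g0 k j)) i
        + (1 / \<epsilon> * X * (\<Sum>k=1..nv. \<omega> k)
           - 1 / \<epsilon> * (\<Sum>k=1..nv. \<omega> k * (v k * mv N Dx (g k) i))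
           - 1 / \<epsilon>\<^sup>2 * mv N Dx \<rho> i * (\<Sum>k=1..nv. \<omega> k * v k))"
      unfolding G_def vavg_def mv_sum
      by (simp add: sum.distrib sum_subtractf sum_distrib_left sum_distrib_right
          sum_divide_distrib sum_negf algebra_simps)
    also have "mv N S (\<lambda>j. vavg nv \<omega> (\<lambda>k. g0 k j)) i = 0"
      using initial_average by (simp add: mv_cong[of N _ "\<lambda>_. 0"])
    finally show ?thesis unfolding weights_sum weights_mean X_def vavg_def by simp
  qed
  then have "wdot N dT G G + 2 * c * wdot N W G G
      \<le> wdot N dB (\<lambda>_. 0) (\<lambda>_. 0) + 2 * wdot N W G (\<lambda>_. 0)"
    by (rule penalized_energy)
  moreover note final_norm_nonneg[of G] weighted_norm_nonneg[of G]
  moreover have "0 < c" using \<sigma>s_pos \<sigma>a_nonneg eps_pos by (simp add: c_def add_pos_nonneg)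
  ultimately have "c * wdot N W G G \<le> 0" by simp
  with \<open>0 < c\<close> \<open>0 \<le> wdot N W G G\<close> have "wdot N W G G = 0"
    by (simp add: mult_le_0_iff)
  then show ?thesis using wdot_self_eq_0D[of N W G i] weight_pos assms unfolding G_def by blast
qed

lemma macro_energy:
  "wdot N dT \<rho> \<rho> \<le> wdot N dB \<rho>0 \<rho>0 - 2 * wdot N W \<rho> (mv N Dx (\<lambda>j. vavg nv \<omega> (\<lambda>k. v k * g k j)))"
proof -
  let ?V = "\<lambda>j. vavg nv \<omega> (\<lambda>k. v k * g k j)"
  have "wdot N dT \<rho> \<rho> + 2 * \<sigma>a * wdot N W \<rho> \<rho>
      \<le> wdot N dB \<rho>0 \<rho>0 + 2 * wdot N W \<rho> (\<lambda>i. - mv N Dx ?V i)"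
    by (rule penalized_energy) (use macro_eq in \<open>simp add: eq_diff_eq\<close>)
  moreover have "0 \<le> \<sigma>a * wdot N W \<rho> \<rho>"
    using \<sigma>a_nonneg weighted_norm_nonneg by (rule mult_nonneg_nonneg)
  ultimately show ?thesis by (simp add: wdot_minus_right)
qed

lemma micro_energy:
  assumes k: "k \<in> {1..nv}"
  shows "\<epsilon>\<^sup>2 * wdot N dT (g k) (g k) \<le> \<epsilon>\<^sup>2 * wdot N dB (g0 k) (g0 k)
    + 2 * \<epsilon> * wdot N W (g k) (\<lambda>i. vavg nv \<omega> (\<lambda>k'. v k' * mv N Dx (g k') i))
    - 2 * v k * wdot N W (g k) (mv N Dx \<rho>)"
proof -
  let ?X = "\<lambda>i. vavg nv \<omega> (\<lambda>k'. v k' * mv N Dx (g k') i)"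
  have "wdot N dT (g k) (g k) + 2 * (\<sigma>s / \<epsilon>\<^sup>2 + \<sigma>a) * wdot N W (g k) (g k)
      \<le> wdot N dB (g0 k) (g0 k) + 2 * wdot N W (g k)
        (\<lambda>i. 1 / \<epsilon> * ?X i - v k / \<epsilon> * mv N Dx (g k) i - v k / \<epsilon>\<^sup>2 * mv N Dx \<rho> i)"
    by (rule penalized_energy) (rule micro_eq_residual[OF k])
  moreover have "wdot N W (g k)
        (\<lambda>i. 1 / \<epsilon> * ?X i - v k / \<epsilon> * mv N Dx (g k) i - v k / \<epsilon>\<^sup>2 * mv N Dx \<rho> i)
      = 1 / \<epsilon> * wdot N W (g k) ?X - v k / \<epsilon>\<^sup>2 * wdot N W (g k) (mv N Dx \<rho>)"
  proof -
    have "wdot N W (g k) (mv N Dx (g k)) = 0"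
      using space_skew[of "g k" "g k"] by simp
    then show ?thesis by (simp only: wdot_linear_right)
  qed
  moreover have "0 \<le> (\<sigma>s / \<epsilon>\<^sup>2 + \<sigma>a) * wdot N W (g k) (g k)"
    using \<sigma>s_pos \<sigma>a_nonneg weighted_norm_nonneg by (simp add: mult_nonneg_nonneg)
  ultimately have "wdot N dT (g k) (g k) \<le> wdot N dB (g0 k) (g0 k)
      + 2 / \<epsilon> * wdot N W (g k) ?X - 2 * v k / \<epsilon>\<^sup>2 * wdot N W (g k) (mv N Dx \<rho>)"
    by linarith
  then have "\<epsilon>\<^sup>2 * wdot N dT (g k) (g k) \<le> \<epsilon>\<^sup>2 * (wdot N dB (g0 k) (g0 k)
      + 2 / \<epsilon> * wdot N W (g k) ?X - 2 * v k / \<epsilon>\<^sup>2 * wdot N W (g k) (mv N Dx \<rho>))"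
    by (rule mult_left_mono) simp
  also have "\<dots> = \<epsilon>\<^sup>2 * wdot N dB (g0 k) (g0 k)
      + 2 * \<epsilon> * wdot N W (g k) ?X - 2 * v k * wdot N W (g k) (mv N Dx \<rho>)"
    using eps_pos by (simp add: field_simps power2_eq_square)
  finally show ?thesis .
qed

lemma energy_estimate:
  "wdot N dT \<rho> \<rho> + \<epsilon>\<^sup>2 * vavg nv \<omega> (\<lambda>k. wdot N dT (g k) (g k))
    \<le> wdot N dB \<rho>0 \<rho>0 + \<epsilon>\<^sup>2 * vavg nv \<omega> (\<lambda>k. wdot N dB (g0 k) (g0 k))"
proof -
  let ?V = "\<lambda>j. vavg nv \<omega> (\<lambda>k. v k * g k j)"
  let ?X = "\<lambda>i. vavg nv \<omega> (\<lambda>k'. v k' * mv N Dx (g k') i)"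
  have flux_avg: "(\<Sum>k=1..nv. \<omega> k * wdot N W (g k) ?X) = 0"
  proof -
    have "(\<Sum>k=1..nv. \<omega> k * wdot N W (g k) ?X) = wdot N W (\<lambda>i. vavg nv \<omega> (\<lambda>k. g k i)) ?X"
      unfolding wdot_sum_left vavg_def ..
    also have "\<dots> = wdot N W (\<lambda>_. 0) ?X"
      by (rule wdot_cong) (simp_all add: micro_average_vanishes)
    finally show ?thesis by simp
  qed
  have coupling_avg: "(\<Sum>k=1..nv. \<omega> k * v k * wdot N W (g k) (mv N Dx \<rho>))
      = - wdot N W \<rho> (mv N Dx ?V)"
  proof -
    have "(\<Sum>k=1..nv. \<omega> k * v k * wdot N W (g k) (mv N Dx \<rho>)) = wdot N W ?V (mv N Dx \<rho>)"
      unfolding wdot_sum_left vavg_def by (simp add: mult.assoc)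
    then show ?thesis using space_skew[of \<rho> ?V] by linarith
  qed
  have "\<epsilon>\<^sup>2 * vavg nv \<omega> (\<lambda>k. wdot N dT (g k) (g k))
      = (\<Sum>k=1..nv. \<omega> k * (\<epsilon>\<^sup>2 * wdot N dT (g k) (g k)))"
    by (simp add: vavg_def sum_distrib_left mult_ac)
  also have "\<dots> \<le> (\<Sum>k=1..nv. \<omega> k * (\<epsilon>\<^sup>2 * wdot N dB (g0 k) (g0 k)
      + 2 * \<epsilon> * wdot N W (g k) ?X - 2 * v k * wdot N W (g k) (mv N Dx \<rho>)))"
    by (intro sum_mono mult_left_mono micro_energy weights_nonneg)
  also have "\<dots> = \<epsilon>\<^sup>2 * vavg nv \<omega> (\<lambda>k. wdot N dB (g0 k) (g0 k))
      + 2 * \<epsilon> * (\<Sum>k=1..nv. \<omega> k * wdot N W (g k) ?X)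
      - 2 * (\<Sum>k=1..nv. \<omega> k * v k * wdot N W (g k) (mv N Dx \<rho>))"
    by (simp add: vavg_def sum.distrib sum_subtractf sum_distrib_left algebra_simps)
  finally show ?thesis
    unfolding flux_avg coupling_avg using macro_energy by linarith
qed

end

section \<open>Space-time SBP operators\<close>

lemma sbp_boundary_identity:
  assumes sbp: "sbp n p x D H Q" and "i \<le> n" "j \<le> n"
  shows "H i i * D i j + H j j * D j i
    = (if i = j then (if i = n then 1 else 0) - (if i = 0 then 1 else 0) else 0)"
proof -
  have "0 < H i i" "0 < H j j" "D i j = Q i j / H i i" "D j i = Q j i / H j j"
    using sbp assms unfolding sbp_def by auto
  then have "H i i * D i j + H j j * D j i = Q i j + Q j i" by simp
  also have "\<dots> = (if i = j then (if i = n then 1 else 0) - (if i = 0 then 1 else 0) else 0)"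
    using sbp assms unfolding sbp_def by (auto simp: mmul_def mtr_def e_last_def e_first_def)
  finally show ?thesis .
qed

text \<open>The one-dimensional periodic operator D - 1/2 H^-1 (e_R (e_R - e_L)^T - e_L (e_L - e_R)^T),
  written as D - 1/2 H^-1 (e_R + e_L) (e_R - e_L)^T.\<close>

definition periodic_sbp :: "nat \<Rightarrow> rmat \<Rightarrow> rmat \<Rightarrow> rmat" where
  "periodic_sbp n D H = (\<lambda>i j. D i j
     - ((if i = n then 1 else 0) + (if i = 0 then 1 else 0))
       * ((if j = n then 1 else 0) - (if j = 0 then 1 else 0)) / (2 * H i i))"

lemma periodic_sbp_skew:
  assumes sbp: "sbp n p x D H Q" and "i \<le> n" "j \<le> n"
  shows "H i i * periodic_sbp n D H i j + H j j * periodic_sbp n D H j i = 0"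
proof -
  define e :: "nat \<Rightarrow> real" where "e k = (if k = n then 1 else 0) + (if k = 0 then 1 else 0)" for k
  define f :: "nat \<Rightarrow> real" where "f k = (if k = n then 1 else 0) - (if k = 0 then 1 else 0)" for k
  have "0 < H i i" "0 < H j j" "1 \<le> n" using sbp assms unfolding sbp_def by auto
  then have "H i i * periodic_sbp n D H i j + H j j * periodic_sbp n D H j i
      = (H i i * D i j + H j j * D j i) - (e i * f j + e j * f i) / 2"
    by (simp add: periodic_sbp_def e_def f_def field_simps)
  also have "e i * f j + e j * f i = 2 * (if i = j then f i else 0)"
    using \<open>1 \<le> n\<close> by (auto simp: e_def f_def)
  finally show ?thesis
    using sbp_boundary_identity[OF assms] by (simp add: f_def)
qed

lemma eq_iff_div_mod_eq: "(i::nat) = j \<longleftrightarrow> i div n = j div n \<and> i mod n = j mod n"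
  by (metis div_mult_mod_eq)

lemma div_Suc_le: "i < Suc m * Suc n \<Longrightarrow> i div Suc n \<le> m"
  using less_mult_imp_div_less[of i "Suc m" "Suc n"] by simp

text \<open>The diagonals of H_t \<otimes> H_x and of (e_m e_m^T) \<otimes> H_x.\<close>

definition st_weight :: "nat \<Rightarrow> rmat \<Rightarrow> rmat \<Rightarrow> nat \<Rightarrow> real" where
  "st_weight nx Htb Hxb i = Htb (i div Suc nx) (i div Suc nx) * Hxb (i mod Suc nx) (i mod Suc nx)"

definition slab_weight :: "nat \<Rightarrow> rmat \<Rightarrow> nat \<Rightarrow> nat \<Rightarrow> real" where
  "slab_weight nx Hxb m i = (if i div Suc nx = m then Hxb (i mod Suc nx) (i mod Suc nx) else 0)"

lemma e_first_eq_e_last: "e_first n = e_last 0"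
  unfolding e_first_def e_last_def ..

lemma qf_kron_slab:
  assumes Hoff: "\<forall>i\<le>nx. \<forall>j\<le>nx. i \<noteq> j \<longrightarrow> Hxb i j = 0"
  shows "qf N (kron (Suc nx) (Suc nx) (mmul 1 (e_last m) (mtr (e_last m))) Hxb) x
    = wdot N (slab_weight nx Hxb m) x x"
proof (rule qf_diag)
  fix i j
  have "i mod Suc nx \<le> nx" "j mod Suc nx \<le> nx" by (simp_all add: less_Suc_eq_le)
  then show "kron (Suc nx) (Suc nx) (mmul 1 (e_last m) (mtr (e_last m))) Hxb i j
    = (if i = j then slab_weight nx Hxb m i else 0)"
    using Hoff eq_iff_div_mod_eq[of i j "Suc nx"]
    by (auto simp: kron_def mmul_def mtr_def e_last_def slab_weight_def)
qed

lemma st_weight_pos: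
  assumes "sbp nt pt tn Dtb Htb Qtb" "sbp nx px xn Dxb Hxb Qxb" "i < Suc nt * Suc nx"
  shows "0 < st_weight nx Htb Hxb i"
proof -
  have "i div Suc nx \<le> nt" "i mod Suc nx \<le> nx"
    using assms(3) div_Suc_le by (auto simp: less_Suc_eq_le)
  then show ?thesis using assms(1,2) unfolding sbp_def st_weight_def by auto
qed

lemma slab_weight_nonneg:
  assumes "sbp nx px xn Dxb Hxb Qxb"
  shows "0 \<le> slab_weight nx Hxb m i"
  using assms unfolding sbp_def slab_weight_def by (auto simp: less_Suc_eq_le less_imp_le)

lemma mmul_dinv: "i < N \<Longrightarrow> mmul N (dinv H) K i j = K i j / H i i"
  unfolding mmul_def dinv_def by (simp add: if_distrib[of "\<lambda>x. x * _"] cong: if_cong)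

lemma Dt_st_time_sbp:
  assumes sbp: "sbp nt pt tn Dtb Htb Qtb" and "i < Suc nt * Suc nx" "j < Suc nt * Suc nx"
  shows "st_weight nx Htb Hxb i * Dt_st nt nx Dtb i j + st_weight nx Htb Hxb j * Dt_st nt nx Dtb j i
    = (if i = j then slab_weight nx Hxb nt i - slab_weight nx Hxb 0 i else 0)"
proof -
  define a a' b b' where "a = i div Suc nx" "a' = j div Suc nx" "b = i mod Suc nx" "b' = j mod Suc nx"
  have "a \<le> nt" "a' \<le> nt" using assms div_Suc_le unfolding a_a'_b_b'_def by auto
  note time = sbp_boundary_identity[OF sbp this]
  have "st_weight nx Htb Hxb i * Dt_st nt nx Dtb i j + st_weight nx Htb Hxb j * Dt_st nt nx Dtb j i
      = (if b = b' then Hxb b b * (Htb a a * Dtb a a' + Htb a' a' * Dtb a' a) else 0)"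
    by (simp add: Dt_st_def kron_def idm_def st_weight_def a_a'_b_b'_def algebra_simps)
  also have "\<dots> = (if i = j then slab_weight nx Hxb nt i - slab_weight nx Hxb 0 i else 0)"
    unfolding time eq_iff_div_mod_eq[of i j "Suc nx"]
    by (auto simp: slab_weight_def a_a'_b_b'_def)
  finally show ?thesis .
qed

lemma st_coupling_entry:
  assumes "i < Suc nt * Suc nx"
  shows "msub (mmul (Suc nt) (tR_st nt nx) (msub (mtr (tR_st nt nx)) (mtr (tL_st nt nx))))
              (mmul (Suc nt) (tL_st nt nx) (msub (mtr (tL_st nt nx)) (mtr (tR_st nt nx)))) i j
    = (if i div Suc nx = j div Suc nx then
         ((if i mod Suc nx = nx then 1 else 0) + (if i mod Suc nx = 0 then 1 else 0))
       * ((if j mod Suc nx = nx then 1 else 0) - (if j mod Suc nx = 0 then 1 else 0)) else 0)"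
proof -
  have "i div Suc nx < Suc nt" using div_Suc_le[OF assms] by simp
  then show ?thesis
    unfolding mmul_def tR_st_def tL_st_def kron_def msub_def mtr_def e_last_def e_first_def idm_def
    by (simp add: if_distrib[of "\<lambda>x. x * _"] sum.delta cong: if_cong)
qed

lemma Dxper_st_eq_periodic_sbp:
  assumes "i < Suc nt * Suc nx"
  shows "Dxper_st nt nx Dxb Hxb i j = (if i div Suc nx = j div Suc nx
    then periodic_sbp nx Dxb Hxb (i mod Suc nx) (j mod Suc nx) else 0)"
proof -
  have "Dxper_st nt nx Dxb Hxb i j = Dx_st nt nx Dxb i j - 1/2 *
      (msub (mmul (Suc nt) (tR_st nt nx) (msub (mtr (tR_st nt nx)) (mtr (tL_st nt nx))))
            (mmul (Suc nt) (tL_st nt nx) (msub (mtr (tL_st nt nx)) (mtr (tR_st nt nx)))) i j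
       / Hx_st nt nx Hxb i i)"
    unfolding Dxper_st_def msc_def msub_def mmul_dinv[OF assms] by simp
  then show ?thesis
    by (simp add: st_coupling_entry[OF assms] Hx_st_def Dx_st_def kron_def idm_def periodic_sbp_def)
qed

lemma Dxper_st_skew:
  assumes sbp: "sbp nx px xn Dxb Hxb Qxb" and "i < Suc nt * Suc nx" "j < Suc nt * Suc nx"
  shows "st_weight nx Htb Hxb i * Dxper_st nt nx Dxb Hxb i j
       + st_weight nx Htb Hxb j * Dxper_st nt nx Dxb Hxb j i = 0"
proof -
  define a a' b b' where "a = i div Suc nx" "a' = j div Suc nx" "b = i mod Suc nx" "b' = j mod Suc nx"
  have "b \<le> nx" "b' \<le> nx" by (simp_all add: a_a'_b_b'_def less_Suc_eq_le)
  note space = periodic_sbp_skew[OF sbp this]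
  have "st_weight nx Htb Hxb i * Dxper_st nt nx Dxb Hxb i j
      + st_weight nx Htb Hxb j * Dxper_st nt nx Dxb Hxb j i
    = (if a = a' then Htb a a * (Hxb b b * periodic_sbp nx Dxb Hxb b b'
         + Hxb b' b' * periodic_sbp nx Dxb Hxb b' b) else 0)"
    unfolding Dxper_st_eq_periodic_sbp[OF assms(2)] Dxper_st_eq_periodic_sbp[OF assms(3)]
    by (simp add: st_weight_def a_a'_b_b'_def algebra_simps)
  then show ?thesis by (simp add: space)
qed

lemma tB_st_gram_entry:
  "mmul (Suc nx) (tB_st nt nx) (mtr (tB_st nt nx)) i j
   = (if i div Suc nx = 0 \<and> j div Suc nx = 0 \<and> i mod Suc nx = j mod Suc nx then 1 else 0)"
  unfolding mmul_def tB_st_def kron_def mtr_def e_first_def idm_def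
  by (auto simp: if_distrib[of "\<lambda>x. x * _"] sum.delta cong: if_cong)
    (use mod_less_divisor[of "Suc nx" j] in linarith)

lemma SAT_st_penalty:
  assumes sbp: "sbp nt pt tn Dtb Htb Qtb" and i: "i < Suc nt * Suc nx"
  shows "st_weight nx Htb Hxb i * SAT_st nt nx Htb i j = (if i = j then slab_weight nx Hxb 0 i else 0)"
proof -
  have "0 < Htb (i div Suc nx) (i div Suc nx)"
    using sbp div_Suc_le[OF i] unfolding sbp_def by auto
  then show ?thesis
    unfolding SAT_st_def mmul_dinv[OF i] tB_st_gram_entry eq_iff_div_mod_eq[of i j "Suc nx"]
    by (auto simp: Ht_st_def kron_def idm_def st_weight_def slab_weight_def)
qed

lemma space_time_sbp_sat_energy:
  assumes sbp_t: "sbp nt pt tn Dtb Htb Qtb" and sbp_x: "sbp nx px xn Dxb Hxb Qxb"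
  shows "sbp_sat_energy (Suc nt * Suc nx) (st_weight nx Htb Hxb)
    (slab_weight nx Hxb nt) (slab_weight nx Hxb 0)
    (Dt_st nt nx Dtb) (Dxper_st nt nx Dxb Hxb) (SAT_st nt nx Htb)"
proof
  fix x y
  show "2 * wdot (Suc nt * Suc nx) (st_weight nx Htb Hxb) x (mv (Suc nt * Suc nx) (Dt_st nt nx Dtb) x)
    = wdot (Suc nt * Suc nx) (slab_weight nx Hxb nt) x x - wdot (Suc nt * Suc nx) (slab_weight nx Hxb 0) x x"
    unfolding wdot_diff_weight[symmetric] by (rule wdot_mv_energy) (rule Dt_st_time_sbp[OF sbp_t])
  show "wdot (Suc nt * Suc nx) (st_weight nx Htb Hxb) x (mv (Suc nt * Suc nx) (Dxper_st nt nx Dxb Hxb) y)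
    + wdot (Suc nt * Suc nx) (st_weight nx Htb Hxb) y (mv (Suc nt * Suc nx) (Dxper_st nt nx Dxb Hxb) x) = 0"
    by (rule wdot_mv_skew) (rule Dxper_st_skew[OF sbp_x])
  show "wdot (Suc nt * Suc nx) (st_weight nx Htb Hxb) x (mv (Suc nt * Suc nx) (SAT_st nt nx Htb) y)
    = wdot (Suc nt * Suc nx) (slab_weight nx Hxb 0) x y"
    by (rule wdot_mv_diag) (rule SAT_st_penalty[OF sbp_t])
qed (auto intro: st_weight_pos[OF sbp_t sbp_x] slab_weight_nonneg[OF sbp_x])

theorem theorem3p4:
  fixes nt nx pt px nv :: nat
    and tn xn :: "nat \<Rightarrow> real"
    and Dtb Htb Qtb Dxb Hxb Qxb :: "nat \<Rightarrow> nat \<Rightarrow> real"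
    and v \<omega> :: "nat \<Rightarrow> real"
    and \<epsilon> \<sigma>s \<sigma>a :: real
    and \<rho> \<rho>0 :: "nat \<Rightarrow> real"
    and g g0 :: "nat \<Rightarrow> nat \<Rightarrow> real"
  assumes sbp_t: "sbp nt pt tn Dtb Htb Qtb"
    and sbp_x: "sbp nx px xn Dxb Hxb Qxb"
    and w_nonneg: "\<forall>k\<in>{1..nv}. 0 \<le> \<omega> k"
    and w_sum: "(\<Sum>k=1..nv. \<omega> k) = 1"
    and w_mom: "(\<Sum>k=1..nv. \<omega> k * v k) = 0"
    and eps: "0 < \<epsilon>" and sig_s: "0 < \<sigma>s" and sig_a: "0 \<le> \<sigma>a"
    and g0_avg: "\<forall>i < Suc nt * Suc nx. vavg nv \<omega> (\<lambda>k. g0 k i) = 0"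
    and eq_rho: "\<forall>i < Suc nt * Suc nx.
        mv (Suc nt * Suc nx) (Dt_st nt nx Dtb) \<rho> i
        + mv (Suc nt * Suc nx) (Dxper_st nt nx Dxb Hxb) (\<lambda>j. vavg nv \<omega> (\<lambda>k. v k * g k j)) i
      = - \<sigma>a * \<rho> i - mv (Suc nt * Suc nx) (SAT_st nt nx Htb) (\<lambda>j. \<rho> j - \<rho>0 j) i"
    and eq_g: "\<forall>k\<in>{1..nv}. \<forall>i < Suc nt * Suc nx.
        mv (Suc nt * Suc nx) (Dt_st nt nx Dtb) (g k) i
        + v k / \<epsilon> * mv (Suc nt * Suc nx) (Dxper_st nt nx Dxb Hxb) (g k) i
        - 1 / \<epsilon> * vavg nv \<omega> (\<lambda>k'. v k' * mv (Suc nt * Suc nx) (Dxper_st nt nx Dxb Hxb) (g k') i)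
        + v k / \<epsilon>\<^sup>2 * mv (Suc nt * Suc nx) (Dxper_st nt nx Dxb Hxb) \<rho> i
      = - (\<sigma>s / \<epsilon>\<^sup>2 + \<sigma>a) * g k i
        - mv (Suc nt * Suc nx) (SAT_st nt nx Htb) (\<lambda>j. g k j - g0 k j) i"
  shows "1/2 * qf (Suc nt * Suc nx)
            (kron (Suc nx) (Suc nx) (mmul 1 (e_last nt) (mtr (e_last nt))) Hxb) \<rho>
         + \<epsilon>\<^sup>2 / 2 * vavg nv \<omega> (\<lambda>k. qf (Suc nt * Suc nx)
            (kron (Suc nx) (Suc nx) (mmul 1 (e_last nt) (mtr (e_last nt))) Hxb) (g k))
       \<le> 1/2 * qf (Suc nt * Suc nx)
            (kron (Suc nx) (Suc nx) (mmul 1 (e_first nt) (mtr (e_first nt))) Hxb) \<rho>0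
         + \<epsilon>\<^sup>2 / 2 * vavg nv \<omega> (\<lambda>k. qf (Suc nt * Suc nx)
            (kron (Suc nx) (Suc nx) (mmul 1 (e_first nt) (mtr (e_first nt))) Hxb) (g0 k))"
proof -
  interpret kinetic_scheme "Suc nt * Suc nx" "st_weight nx Htb Hxb" "slab_weight nx Hxb nt"
      "slab_weight nx Hxb 0" "Dt_st nt nx Dtb" "Dxper_st nt nx Dxb Hxb" "SAT_st nt nx Htb"
      nv \<omega> v \<epsilon> \<sigma>s \<sigma>a \<rho> \<rho>0 g g0
    by (intro kinetic_scheme.intro space_time_sbp_sat_energy[OF sbp_t sbp_x] kinetic_scheme_axioms.intro)
      (use assms in auto)
  have "\<forall>i\<le>nx. \<forall>j\<le>nx. i \<noteq> j \<longrightarrow> Hxb i j = 0" using sbp_x unfolding sbp_def by blast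
  note slab = qf_kron_slab[OF this]
  show ?thesis
    using energy_estimate unfolding slab e_first_eq_e_last by simp
qed

end
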